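(* Let $s\in(0,2]$, $P$ a finite set of $n$ points in $(\mathbb{R}^d,\ell_s)$ and $\varepsilon>0$. In the exact nearest neighbor query procedure described in the context, the expected running time of step (2) is $$\tilde O\!\left(\frac{n^{\varrho'}}{p_1}\left(\frac{1}{\ln(1/p_2')}+1\right)+\frac{n^\alpha}{p_1}\,|\varepsilon(2+\varepsilon)\text{-}\mathrm{NN}_P(q)|\right),$$ where $\varrho'=\frac{\ln p_1}{\ln p_2'}$ and $\alpha=\varrho'\left(1-\frac{\ln p_0}{\ln p_1}\right)$, with $p_0=\Phi(\frac{1}{1+\varepsilon})$, $p_1=\Phi(1)$, $p_2'=\Phi(((1+\varepsilon)^s+(1+\varepsilon)^{-s}-1)^{1/s})$.
   Context: $\mathrm{d}$ is the $\ell_s$ distance; $\mathrm{d}(x,P)=\min\{\mathrm{d}(x,p):p\in P\setminus\{x\}\}$; $N_P(x,R)$ is the set of $p\in P\setminus\{x\}$ with $\mathrm{d}(x,p)\le R$; for $\delta>0$, $\delta\text{-}\mathrm{NN}_P(x)=N_P(x,(1+\delta)\mathrm{d}(x,P))$. $\Phi$: fix an $s$-stable distribution $D$ (i.e. for i.i.d. $X_i\sim D$, $\sum\alpha_iX_i$ has the law of $(\sum|\alpha_i|^s)^{1/s}X$, $X\sim D$) and $w>0$; hash functions are $f_{a,b}(x)=\lfloor(a\cdot x+b)/w\rfloor$ with $a$ having i.i.d. $D$ coordinates and $b$ uniform on $[0,w)$; $\Phi(l)=\int_0^w\frac1l f_D(t/l)(1-t/w)dt$ is the collision probability of two points at distance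 $l$, where $f_D$ is the density of $|X|$, $X\sim D$. Ingredients. (1) An $\varepsilon$-approximate nearest neighbor structure $\mathcal{T}(P,\varepsilon)$ (Har-Peled's tree of LSH $(r,\varepsilon)$-PLEB structures) which fixes a finite set of candidate radii and, given $q$, outputs one of them, $r$, with $\mathrm{d}(q,P)\le r\le(1+\varepsilon)\mathrm{d}(q,P)$ with probability at least $1-1/n$. (2) For each candidate radius $r$, the structure $\mathcal{A}'(P,r,\varepsilon)$: with $r'=r(1+\frac{1}{(1+\varepsilon)^s-1})^{1/s}$ and $\varepsilon'=((1+\varepsilon)^s+(1+\varepsilon)^{-s}-1)^{1/s}-1$, lift $P$ to $\mathbb{R}^{d+1}$ with last coordinate $0$ and rescale by $1/r'$; with $\pi_1=\Phi(1)$, $\pi_2=\Phi(1+\varepsilon')$, $\varrho'=\ln\pi_1/\ln\pi_2$, $k=\lceil\ln n/\ln(1/\pi_2)\rceil$, $L=\lceil n^{\varrho'}/\pi_1\rceil$, for $\lceil c\ln n\rceil$ rounds draw $L$ vectors $g_j$ of $k$ independent $f_{a,b}$ and hash the lifted points into table $H_j$ by $g_j$. A query lifts $q$ with last coordinate $r/((1+\varepsilon)^s-1)^{1/s}$, rescales by $1/r'$, collects all colliding points over all tables and rounds, keeps those within distance $1$, and returns their preimages. Query procedure: (1) answer an $\varepsilon$-NN query with $\mathcal{T}(P,\varepsilon)$, obtaining $r$; (2) answer the exhaustive $r$-PLEB query with $\mathcal{A}'(P,r,\varepsilon)$, obtaining $S$; (3) return the point of $S$ closest to $q$ (arbitrary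 point of $P$ if $S=\emptyset$). Distance computations and hash evaluations have unit cost; $\tilde O$ hides factors polylogarithmic in $n/\varepsilon$. *)

theory Defs
  imports "HOL-Probability.Probability"
begin

text \<open>Points of R^d are functions nat => real whose coordinates >= d are 0.\<close>

definition ldist :: "real \<Rightarrow> nat \<Rightarrow> (nat \<Rightarrow> real) \<Rightarrow> (nat \<Rightarrow> real) \<Rightarrow> real" where
  "ldist s d x y = (\<Sum>i<d. \<bar>x i - y i\<bar> powr s) powr (1 / s)"

definition nn_dist :: "real \<Rightarrow> nat \<Rightarrow> (nat \<Rightarrow> real) set \<Rightarrow> (nat \<Rightarrow> real) \<Rightarrow> real" where
  "nn_dist s d P x = Min (ldist s d x ` (P - {x}))"

definition nbhd :: "real \<Rightarrow> nat \<Rightarrow> (nat \<Rightarrow> real) set \<Rightarrow> (nat \<Rightarrow> real) \<Rightarrow> real \<Rightarrow> (nat \<Rightarrow> real) set" where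
  "nbhd s d P x R = {p \<in> P - {x}. ldist s d x p \<le> R}"

definition approx_NN :: "real \<Rightarrow> nat \<Rightarrow> (nat \<Rightarrow> real) set \<Rightarrow> real \<Rightarrow> (nat \<Rightarrow> real) \<Rightarrow> (nat \<Rightarrow> real) set" where
  "approx_NN s d P \<delta> x = nbhd s d P x ((1 + \<delta>) * nn_dist s d P x)"

definition s_stable :: "real \<Rightarrow> real measure \<Rightarrow> bool" where
  "s_stable s D \<longleftrightarrow> prob_space D \<and> sets D = sets borel \<and>
     (\<forall>(m::nat) (\<alpha>::nat \<Rightarrow> real).
        distr (PiM {..<m} (\<lambda>_. D)) borel (\<lambda>x. \<Sum>i<m. \<alpha> i * x i)
        = distr D borel (\<lambda>x. (\<Sum>i<m. \<bar>\<alpha> i\<bar> powr s) powr (1 / s) * x))"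

definition abs_density :: "real measure \<Rightarrow> (real \<Rightarrow> real) \<Rightarrow> bool" where
  "abs_density D f \<longleftrightarrow> f \<in> borel_measurable borel \<and> (\<forall>t. 0 \<le> f t) \<and>
     distr D borel abs = density lborel (\<lambda>t. ennreal (f t))"

definition Phi :: "(real \<Rightarrow> real) \<Rightarrow> real \<Rightarrow> real \<Rightarrow> real" where
  "Phi f w l = set_lebesgue_integral lborel {0..w} (\<lambda>t. (1 / l) * f (t / l) * (1 - t / w))"

definition hash_measure :: "real measure \<Rightarrow> nat \<Rightarrow> real \<Rightarrow> ((nat \<Rightarrow> real) \<times> real) measure" where
  "hash_measure D d w = pair_measure (PiM {..<Suc d} (\<lambda>_. D)) (uniform_measure lborel {0..<w})"

definition hashval :: "real \<Rightarrow> nat \<Rightarrow> (nat \<Rightarrow> real) \<times> real \<Rightarrow> (nat \<Rightarrow> real) \<Rightarrow> int" where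
  "hashval w d ab x = \<lfloor>((\<Sum>i<Suc d. fst ab i * x i) + snd ab) / w\<rfloor>"

definition lift :: "nat \<Rightarrow> real \<Rightarrow> (nat \<Rightarrow> real) \<Rightarrow> (nat \<Rightarrow> real)" where
  "lift d h x = (\<lambda>i. if i < d then x i else if i = d then h else 0)"

definition rescale :: "real \<Rightarrow> (nat \<Rightarrow> real) \<Rightarrow> (nat \<Rightarrow> real)" where
  "rescale c x = (\<lambda>i. x i / c)"

text \<open>Expected cost of the exhaustive r-PLEB query of A'(P,r,eps) at q:
  hash evaluations of the query (R*L*k) plus one distance computation per colliding point
  in each table of each round (counted with multiplicity).\<close>
definition A_query_cost ::
  "real \<Rightarrow> real measure \<Rightarrow> (real \<Rightarrow> real) \<Rightarrow> real \<Rightarrow> real \<Rightarrow> nat \<Rightarrow> (nat \<Rightarrow> real) set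
   \<Rightarrow> real \<Rightarrow> real \<Rightarrow> (nat \<Rightarrow> real) \<Rightarrow> ennreal" where
  "A_query_cost s D f w c d P \<epsilon> r q =
    (let n = real (card P);
         r' = r * (1 + 1 / ((1 + \<epsilon>) powr s - 1)) powr (1 / s);
         \<epsilon>' = ((1 + \<epsilon>) powr s + (1 + \<epsilon>) powr (- s) - 1) powr (1 / s) - 1;
         \<pi>1 = Phi f w 1;
         \<pi>2 = Phi f w (1 + \<epsilon>');
         \<rho> = ln \<pi>1 / ln \<pi>2;
         k = nat \<lceil>ln n / ln (1 / \<pi>2)\<rceil>;
         L = nat \<lceil>n powr \<rho> / \<pi>1\<rceil>;
         R = nat \<lceil>c * ln n\<rceil>;
         P' = (\<lambda>p. rescale r' (lift d 0 p));
         q' = rescale r' (lift d (r / ((1 + \<epsilon>) powr s - 1) powr (1 / s)) q)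
     in \<integral>\<^sup>+ H. ennreal (real (R * L * k) +
            (\<Sum>ij\<in>{..<R} \<times> {..<L}.
               real (card {p \<in> P. \<forall>m<k. hashval w d (H ij m) (P' p) = hashval w d (H ij m) q'})))
        \<partial>(PiM ({..<R} \<times> {..<L}) (\<lambda>_. PiM {..<k} (\<lambda>_. hash_measure D d w))))"

text \<open>Expected running time of step (2): the radius r is the (random) output of the
  eps-NN structure T, independent of the hash functions of A'.\<close>
definition step2_time ::
  "real \<Rightarrow> real measure \<Rightarrow> (real \<Rightarrow> real) \<Rightarrow> real \<Rightarrow> real \<Rightarrow> nat \<Rightarrow> (nat \<Rightarrow> real) set
   \<Rightarrow> real \<Rightarrow> real pmf \<Rightarrow> (nat \<Rightarrow> real) \<Rightarrow> ennreal" where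
  "step2_time s D f w c d P \<epsilon> T q = (\<integral>\<^sup>+ r. A_query_cost s D f w c d P \<epsilon> r q \<partial>(measure_pmf T))"

end

theory Submission
  imports Defs
begin

text \<open>
  By linearity of
  expectation the cost is R L k plus R L times the sum over the data points of Phi(l)^k, with l the
  distance after lifting to R^(d+1) and rescaling. The lifting puts every point at distance at least
  1/(1+\<epsilon>) from the query, so each term is at most p0^k. If r overestimates the nearest-neighbour
  distance by a factor at most 1+\<epsilon>, every point outside the \<epsilon>(2+\<epsilon>)-NN set is lifted beyond
  1+\<epsilon>', so these points contribute at most n p2'^k \<le> 1; a bad radius occurs with probability at
  most 1/n and costs at most R L n. It remains to insert k \<approx> ln n / ln (1/p2'), L \<approx> n^\<rho>'/p1 and
  R \<approx> c ln n, using n^\<rho>' p0^k \<le> n^\<alpha>. That Phi lies strictly between 0 and 1, as the logarithms need,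
  holds because D has a density, so no atom at 0, while by stability X - Y \<sim> 2^(1/s) X still puts
  mass near 0.
\<close>

section \<open>Collisions of a randomly shifted floor\<close>

lemma emeasure_lborel_Ico_ennreal: "emeasure lborel {l..<u::real} = ennreal (u - l)"
  by (cases "l \<le> u") (auto simp: ennreal_neg)

lemma floor_collision_offset:
  fixes u v w b :: real
  assumes w: "0 < w" and b: "0 \<le> b" "b < w" and coll: "\<lfloor>(u + b) / w\<rfloor> = \<lfloor>(v + b) / w\<rfloor>"
  defines "c \<equiv> (real_of_int \<lfloor>u / w\<rfloor> + 1) * w - u"
  shows "b < c - (v - u) \<or> (c \<le> b \<and> b < c + w - (v - u))"
proof -
  define K where "K = \<lfloor>u / w\<rfloor>"
  define N where "N = \<lfloor>(u + b) / w\<rfloor>"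
  have K: "real_of_int K * w \<le> u" "u < (real_of_int K + 1) * w"
    using floor_divide_lower[OF w, of u] floor_divide_upper[OF w, of u] by (auto simp: K_def)
  have N: "real_of_int N * w \<le> u + b" "v + b < (real_of_int N + 1) * w"
    using floor_divide_lower[OF w, of "u + b"] floor_divide_upper[OF w, of "v + b"] coll
    by (auto simp: N_def)
  have "real_of_int N * w < (real_of_int K + 2) * w" "real_of_int K * w < (real_of_int N + 1) * w"
    using K N floor_divide_upper[OF w, of "u + b"] b by (auto simp: N_def algebra_simps)
  then have "N < K + 2" "K < N + 1"
    using w by (simp_all del: of_int_add add: mult_less_cancel_right)
  then have "N = K \<or> N = K + 1"
    by linarith
  then show ?thesis
    using N by (auto simp: c_def K_def[symmetric] algebra_simps)
qed

text \<open>Up to the shift u, the offsets b of a collision form at most two intervals of total length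
  w - (v - u) in [0, w).\<close>
lemma floor_collision_measure_le:
  fixes u v w :: real
  assumes w: "0 < w"
  shows "emeasure lborel {b \<in> {0..<w}. \<lfloor>(u + b) / w\<rfloor> = \<lfloor>(v + b) / w\<rfloor>} \<le> ennreal (max 0 (w - (v - u)))"
proof -
  define c where "c = (real_of_int \<lfloor>u / w\<rfloor> + 1) * w - u"
  have c: "0 < c" "c \<le> w"
    using floor_divide_lower[OF w, of u] floor_divide_upper[OF w, of u] by (auto simp: c_def algebra_simps)
  have "{b \<in> {0..<w}. \<lfloor>(u + b) / w\<rfloor> = \<lfloor>(v + b) / w\<rfloor>} \<subseteq> {0..<c - (v - u)} \<union> {c..<min w (c + w - (v - u))}"
    using floor_collision_offset[OF w] by (fastforce simp: c_def)
  then have "emeasure lborel {b \<in> {0..<w}. \<lfloor>(u + b) / w\<rfloor> = \<lfloor>(v + b) / w\<rfloor>}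
      \<le> emeasure lborel {0..<c - (v - u)} + emeasure lborel {c..<min w (c + w - (v - u))}"
    by (intro order.trans[OF emeasure_mono emeasure_subadditive]) auto
  also have "\<dots> = ennreal (max 0 (c - (v - u))) + ennreal (max 0 (min w (c + w - (v - u)) - c))"
    by (simp add: emeasure_lborel_Ico_ennreal ennreal_max_0)
  also have "\<dots> = ennreal (max 0 (c - (v - u)) + max 0 (min w (c + w - (v - u)) - c))"
    by (rule ennreal_plus[symmetric]) auto
  also have "\<dots> \<le> ennreal (max 0 (w - (v - u)))"
    using c by (intro ennreal_leI) linarith
  finally show ?thesis .
qed

lemma uniform_floor_collision_le:
  fixes u v w :: real
  assumes w: "0 < w"
  shows "emeasure (uniform_measure lborel {0..<w}) {b. \<lfloor>(u + b) / w\<rfloor> = \<lfloor>(v + b) / w\<rfloor>}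
    \<le> ennreal (max 0 (1 - \<bar>u - v\<bar> / w))"
proof -
  have "emeasure lborel {b \<in> {0..<w}. \<lfloor>(u + b) / w\<rfloor> = \<lfloor>(v + b) / w\<rfloor>} \<le> ennreal (max 0 (w - \<bar>u - v\<bar>))"
    using floor_collision_measure_le[OF w, of u v] floor_collision_measure_le[OF w, of v u]
    by (cases "u \<le> v") (auto simp: eq_commute)
  then have "emeasure lborel ({0..<w} \<inter> {b. \<lfloor>(u + b) / w\<rfloor> = \<lfloor>(v + b) / w\<rfloor>}) / emeasure lborel {0..<w}
      \<le> ennreal (max 0 (w - \<bar>u - v\<bar>)) / ennreal w"
    using w by (simp add: Int_def divide_right_mono_ennreal conj_commute)
  also have "\<dots> = ennreal (max 0 (1 - \<bar>u - v\<bar> / w))"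
    using w by (subst divide_ennreal) (auto simp: max_def field_simps)
  finally show ?thesis
    by (subst emeasure_uniform_measure) auto
qed

lemma floor_cell_positive:
  fixes M :: "real measure"
  assumes M: "prob_space M" and sets_M: "sets M = sets borel" and \<eta>: "0 < \<eta>"
  shows "\<exists>j::int. 0 < emeasure M {y. \<lfloor>y / \<eta>\<rfloor> = j}"
proof (rule ccontr)
  assume "\<not> ?thesis"
  then have "AE y in M. \<lfloor>y / \<eta>\<rfloor> \<noteq> j" for j
    using sets_M by (intro AE_I'[of "{y. \<lfloor>y / \<eta>\<rfloor> = j}"]) (auto simp: not_less)
  then have "AE y in M. \<forall>j\<in>UNIV. \<lfloor>y / \<eta>\<rfloor> \<noteq> j"
    by (intro AE_ball_countable') auto
  then show False
    by (simp add: prob_space.AE_False[OF M])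
qed

lemma abs_diff_less_if_floor_eq:
  fixes a b :: real
  assumes "\<lfloor>a\<rfloor> = \<lfloor>b\<rfloor>"
  shows "\<bar>a - b\<bar> < 1"
  using assms floor_correct[of a] floor_correct[of b] by linarith

text \<open>Two independent samples fall into a common cell of width \<eta> with positive probability.\<close>
lemma PiM_abs_diff_less_pos:
  fixes M :: "real measure"
  assumes M: "prob_space M" and sets_M: "sets M = sets borel" and \<eta>: "0 < \<eta>"
  defines "M2 \<equiv> PiM {..<2::nat} (\<lambda>_. M)"
  shows "0 < emeasure M2 {x \<in> space M2. \<bar>x 0 - x 1\<bar> < \<eta>}"
proof -
  note sets_M [measurable_cong]
  interpret prob_space M
    by (rule M)
  interpret product_prob_space "\<lambda>_::nat. M"
    by unfold_locales
  obtain j where j: "0 < emeasure M {y. \<lfloor>y / \<eta>\<rfloor> = j}"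
    using floor_cell_positive[OF M sets_M \<eta>] by blast
  define A where "A = {y. \<lfloor>y / \<eta>\<rfloor> = j}"
  have "emeasure M2 (Pi\<^sub>E {..<2::nat} (\<lambda>_. A)) = (\<Prod>i<2::nat. emeasure M A)"
    unfolding M2_def by (rule emeasure_PiM) (auto simp: A_def sets_M)
  then have "0 < emeasure M2 (Pi\<^sub>E {..<2::nat} (\<lambda>_. A))"
    using j by (simp add: A_def numeral_2_eq_2 ennreal_zero_less_mult_iff)
  also have "Pi\<^sub>E {..<2::nat} (\<lambda>_. A) \<subseteq> {x \<in> space M2. \<bar>x 0 - x 1\<bar> < \<eta>}"
  proof
    fix x assume x: "x \<in> Pi\<^sub>E {..<2::nat} (\<lambda>_. A)"
    then have "\<bar>x 0 / \<eta> - x 1 / \<eta>\<bar> < 1"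
      by (intro abs_diff_less_if_floor_eq) (auto simp: A_def PiE_iff)
    then have "\<bar>x 0 - x 1\<bar> < \<eta>"
      using \<eta> by (simp add: diff_divide_distrib[symmetric] divide_less_eq)
    then show "x \<in> {x \<in> space M2. \<bar>x 0 - x 1\<bar> < \<eta>}"
      using x sets_eq_imp_space_eq[OF sets_M] by (auto simp: M2_def space_PiM)
  qed
  then have "emeasure M2 (Pi\<^sub>E {..<2::nat} (\<lambda>_. A)) \<le> emeasure M2 {x \<in> space M2. \<bar>x 0 - x 1\<bar> < \<eta>}"
    by (intro emeasure_mono) (unfold M2_def, measurable)
  finally show ?thesis .
qed

lemma nn_integral_indicator_PiM_component:
  assumes N: "prob_space N" and i: "i \<in> I" and A: "A \<in> sets N"
  shows "(\<integral>\<^sup>+ H. indicator A (H i) \<partial>PiM I (\<lambda>_. N)) = emeasure N A"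
proof -
  have "(\<integral>\<^sup>+ H. indicator A (H i) \<partial>PiM I (\<lambda>_. N)) = (\<integral>\<^sup>+ g. indicator A g \<partial>distr (PiM I (\<lambda>_. N)) N (\<lambda>H. H i))"
    using A i by (intro nn_integral_distr[symmetric]) auto
  also have "distr (PiM I (\<lambda>_. N)) N (\<lambda>H. H i) = N"
    using N i by (intro distr_PiM_component) auto
  finally show ?thesis
    using A by simp
qed

lemma card_filter_ennreal:
  assumes "finite P"
  shows "ennreal (real (card {p \<in> P. A p})) = (\<Sum>p\<in>P. indicator {p. A p} p)"
proof -
  have "real (card {p \<in> P. A p}) = (\<Sum>p\<in>P. if A p then 1 else 0)"
    using sum.inter_filter[OF assms, of "\<lambda>_. 1::real" A] by simp
  moreover have "(\<Sum>p\<in>P. ennreal (if A p then 1 else 0)) = ennreal (\<Sum>p\<in>P. if A p then 1 else 0)"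
    by (rule sum_ennreal) simp
  moreover have "(\<Sum>p\<in>P. indicator {p. A p} p) = (\<Sum>p\<in>P. ennreal (if A p then 1 else 0))"
    by (rule sum.cong) (auto simp: indicator_def)
  ultimately show ?thesis
    by simp
qed

lemma nn_integral_pmf_le_split:
  fixes T :: "'a pmf" and F :: "'a \<Rightarrow> ennreal" and G :: "'a set" and a b \<delta> :: real
  assumes F: "\<And>r. r \<in> set_pmf T \<Longrightarrow> F r \<le> ennreal a + ennreal b * indicator (- G) r"
    and G: "1 - \<delta> \<le> measure_pmf.prob T G" and a: "0 \<le> a" and b: "0 \<le> b"
  shows "(\<integral>\<^sup>+ r. F r \<partial>measure_pmf T) \<le> ennreal (a + b * \<delta>)"
proof -
  have "(\<integral>\<^sup>+ r. F r \<partial>measure_pmf T) \<le> (\<integral>\<^sup>+ r. ennreal a + ennreal b * indicator (- G) r \<partial>measure_pmf T)"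
    using F by (intro nn_integral_mono_AE) (simp add: AE_measure_pmf_iff)
  also have "\<dots> = ennreal a + ennreal b * emeasure (measure_pmf T) (- G)"
    by (simp add: nn_integral_add nn_integral_cmult_indicator measure_pmf.emeasure_space_1)
  also have "\<dots> = ennreal (a + b * measure_pmf.prob T (- G))"
    using a b by (simp add: measure_pmf.emeasure_eq_measure ennreal_mult'' ennreal_plus)
  also have "measure_pmf.prob T (- G) \<le> \<delta>"
    using G measure_pmf.prob_compl[of G T] by (simp add: Compl_eq_Diff_UNIV)
  then have "ennreal (a + b * measure_pmf.prob T (- G)) \<le> ennreal (a + b * \<delta>)"
    using b by (intro ennreal_leI add_left_mono mult_left_mono)
  finally show ?thesis .
qed

section \<open>Distances after lifting\<close>

text \<open>The distance between the lifted and rescaled images of a data point and of the query, as a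
  function of their original distance t (see lift_rescale_dist).\<close>
definition lifted_dist :: "real \<Rightarrow> real \<Rightarrow> real \<Rightarrow> real \<Rightarrow> real" where
  "lifted_dist s \<epsilon> r t = ((t powr s * ((1 + \<epsilon>) powr s - 1) / r powr s + 1) / (1 + \<epsilon>) powr s) powr (1 / s)"

lemma lift_rescale_dist:
  fixes s \<epsilon> r :: real and p q :: "nat \<Rightarrow> real" and d :: nat
  assumes s: "0 < s" and \<epsilon>: "0 < \<epsilon>" and r: "0 < r"
  defines "r' \<equiv> r * (1 + 1 / ((1 + \<epsilon>) powr s - 1)) powr (1 / s)"
  defines "h \<equiv> r / ((1 + \<epsilon>) powr s - 1) powr (1 / s)"
  shows "(\<Sum>i<Suc d. \<bar>rescale r' (lift d 0 p) i - rescale r' (lift d h q) i\<bar> powr s) powr (1 / s)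
     = lifted_dist s \<epsilon> r (ldist s d q p)"
proof -
  define A where "A = (1 + \<epsilon>) powr s - 1"
  have A: "0 < A"
    using s \<epsilon> by (simp add: A_def gr_one_powr)
  have "0 < 1 + 1 / A"
    using A by (simp add: add_pos_pos)
  then have r': "0 < r'" and h: "0 \<le> h"
    using A r by (auto simp: r'_def h_def A_def[symmetric])
  have r'_powr: "r' powr s = r powr s * (1 + 1 / A)"
    unfolding r'_def A_def[symmetric] powr_mult using A s by (simp add: powr_powr)
  have h_powr: "h powr s = r powr s / A"
    unfolding h_def A_def[symmetric] powr_divide using A s by (simp add: powr_powr)
  have ldist_powr: "(\<Sum>i<d. \<bar>p i - q i\<bar> powr s) = ldist s d q p powr s"
    unfolding ldist_def using s by (simp add: powr_powr abs_minus_commute sum_nonneg)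
  have coord: "\<bar>rescale r' (lift d 0 p) i - rescale r' (lift d h q) i\<bar> powr s
      = (if i < d then \<bar>p i - q i\<bar> powr s else h powr s) / r' powr s" if "i < Suc d" for i
    using that r' h
    by (auto simp: rescale_def lift_def diff_divide_distrib[symmetric] powr_divide abs_minus_commute)
  have "(\<Sum>i<Suc d. \<bar>rescale r' (lift d 0 p) i - rescale r' (lift d h q) i\<bar> powr s)
      = (ldist s d q p powr s + r powr s / A) / (r powr s * (1 + 1 / A))"
    by (simp add: coord sum_divide_distrib[symmetric] ldist_powr r'_powr h_powr add_divide_distrib)
  also have "\<dots> = (ldist s d q p powr s * A / r powr s + 1) / (A + 1)"
  proof -
    have "(a + c / A) / (c * (1 + 1 / A)) = (a * A / c + 1) / (A + 1)" if "0 < c" for a c :: real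
    proof -
      have "a + c / A = (a * A + c) / A" "c * (1 + 1 / A) = c * (A + 1) / A"
        "a * A / c + 1 = (a * A + c) / c"
        using A that by (simp_all add: field_simps)
      then show ?thesis
        using A that by simp
    qed
    then show ?thesis
      using r by simp
  qed
  finally show ?thesis
    by (simp add: lifted_dist_def A_def)
qed

lemma le_powr_inverse_if_powr_le:
  fixes a x s :: real
  assumes "0 < s" "0 \<le> a" "a powr s \<le> x"
  shows "a \<le> x powr (1 / s)"
proof -
  have "a = (a powr s) powr (1 / s)"
    using assms by (simp add: powr_powr)
  also have "\<dots> \<le> x powr (1 / s)"
    using assms by (intro powr_mono2) auto
  finally show ?thesis .
qed

lemma lifted_dist_ge:
  assumes s: "0 < s" and \<epsilon>: "0 < \<epsilon>" and r: "0 < r"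
  shows "1 / (1 + \<epsilon>) \<le> lifted_dist s \<epsilon> r t"
  unfolding lifted_dist_def
proof (rule le_powr_inverse_if_powr_le)
  have "(1 / (1 + \<epsilon>)) powr s = 1 / (1 + \<epsilon>) powr s"
    using \<epsilon> by (simp add: powr_divide)
  also have "\<dots> \<le> (t powr s * ((1 + \<epsilon>) powr s - 1) / r powr s + 1) / (1 + \<epsilon>) powr s"
    using s \<epsilon> by (intro divide_right_mono) (auto simp: gr_one_powr less_imp_le)
  finally show "(1 / (1 + \<epsilon>)) powr s \<le> \<dots>" .
qed (use s \<epsilon> in auto)

lemma lifted_dist_pos:
  assumes "0 < s" "0 < \<epsilon>" "0 < r"
  shows "0 < lifted_dist s \<epsilon> r t"
  using lifted_dist_ge[OF assms, of t] assms(2) by (simp add: less_le_trans[rotated])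

lemma far_threshold_pos:
  fixes s \<epsilon> :: real
  assumes "0 < s" "0 < \<epsilon>"
  shows "0 < ((1 + \<epsilon>) powr s + (1 + \<epsilon>) powr (- s) - 1) powr (1 / s)"
proof -
  have "1 < (1 + \<epsilon>) powr s" "0 < (1 + \<epsilon>) powr (- s)"
    using assms by (auto intro: gr_one_powr)
  then have "0 < (1 + \<epsilon>) powr s + (1 + \<epsilon>) powr (- s) - 1"
    by linarith
  then show ?thesis
    by simp
qed

lemma lifted_dist_far:
  assumes s: "0 < s" and \<epsilon>: "0 < \<epsilon>" and r: "0 < r" and far: "(1 + \<epsilon>) * r < t"
  shows "((1 + \<epsilon>) powr s + (1 + \<epsilon>) powr (- s) - 1) powr (1 / s) \<le> lifted_dist s \<epsilon> r t"
  unfolding lifted_dist_def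
proof (rule powr_mono2)
  define B where "B = (1 + \<epsilon>) powr s"
  have B: "1 < B"
    using s \<epsilon> by (simp add: B_def gr_one_powr)
  have "B * r powr s \<le> t powr s"
    using far s \<epsilon> r by (auto simp: B_def powr_mult[symmetric] intro: powr_mono2)
  then have "B * (B - 1) \<le> t powr s * (B - 1) / r powr s"
    using B r by (simp add: pos_le_divide_eq mult_right_mono mult.commute mult.left_commute)
  then have "(B * (B - 1) + 1) / B \<le> (t powr s * (B - 1) / r powr s + 1) / B"
    using B by (simp add: divide_right_mono)
  moreover have "(B * (B - 1) + 1) / B = B + 1 / B - 1"
    using B by (simp add: field_simps)
  moreover have "(1 + \<epsilon>) powr (- s) = 1 / B"
    by (simp add: B_def powr_minus_divide)
  ultimately show "(1 + \<epsilon>) powr s + (1 + \<epsilon>) powr (- s) - 1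
      \<le> (t powr s * ((1 + \<epsilon>) powr s - 1) / r powr s + 1) / (1 + \<epsilon>) powr s"
    by (simp add: B_def)
  have "1 \<le> B + 1 / B"
    using B by (simp add: add_increasing2 less_imp_le)
  then show "0 \<le> (1 + \<epsilon>) powr s + (1 + \<epsilon>) powr (- s) - 1"
    using B by (simp add: B_def powr_minus_divide)
qed (use s in auto)

section \<open>Near and far points, and the choice of parameters\<close>

lemma ldist_nonneg: "0 \<le> ldist s d x y"
  by (simp add: ldist_def)

lemma approx_NN_nonempty:
  assumes P: "finite P" and Pq: "P - {q} \<noteq> {}" and \<delta>: "0 \<le> \<delta>"
  shows "approx_NN s d P \<delta> q \<noteq> {}"
proof -
  have "nn_dist s d P q \<in> ldist s d q ` (P - {q})"
    unfolding nn_dist_def using P Pq by (intro Min_in) auto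
  then obtain p where p: "p \<in> P - {q}" "ldist s d q p = nn_dist s d P q"
    by (metis imageE)
  then have "p \<in> approx_NN s d P \<delta> q"
    using \<delta> ldist_nonneg[of s d q p]
    by (auto simp: approx_NN_def nbhd_def intro: mult_le_cancel_right1[THEN iffD2])
  then show ?thesis
    by blast
qed

lemma far_point_dist:
  assumes p: "p \<in> P" "p \<noteq> q" "p \<notin> approx_NN s d P (\<epsilon> * (2 + \<epsilon>)) q"
    and r: "r \<le> (1 + \<epsilon>) * nn_dist s d P q" and \<epsilon>: "0 < \<epsilon>"
  shows "(1 + \<epsilon>) * r < ldist s d q p"
proof -
  have "(1 + \<epsilon>) * r \<le> (1 + \<epsilon>) * ((1 + \<epsilon>) * nn_dist s d P q)"
    using r \<epsilon> by (intro mult_left_mono) auto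
  also have "\<dots> = (1 + \<epsilon> * (2 + \<epsilon>)) * nn_dist s d P q"
    by (simp add: algebra_simps)
  also have "\<dots> < ldist s d q p"
    using p unfolding approx_NN_def nbhd_def by auto
  finally show ?thesis .
qed

lemma sum_le_near_far:
  fixes g :: "'a \<Rightarrow> real"
  assumes P: "finite P" and S: "finite S" and a: "0 \<le> a" and b: "0 \<le> b"
    and g: "\<And>p. p \<in> P \<Longrightarrow> g p \<le> (if p \<in> insert q S then a else b)"
  shows "(\<Sum>p\<in>P. g p) \<le> a * (real (card S) + 1) + real (card P) * b"
proof -
  have "(\<Sum>p\<in>P. g p) \<le> (\<Sum>p\<in>P. (if p \<in> insert q S then a else 0) + b)"
    using g b by (intro sum_mono) fastforce
  also have "\<dots> = a * real (card (P \<inter> insert q S)) + real (card P) * b"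
    using P by (simp add: sum.distrib sum.If_cases Int_def)
  also have "card (P \<inter> insert q S) \<le> card S + 1"
    using S card_insert_le[of S q] card_mono[of "insert q S" "P \<inter> insert q S"]
    by (auto simp: card_insert_if split: if_splits)
  then have "a * real (card (P \<inter> insert q S)) \<le> a * (real (card S) + 1)"
    using a by (intro mult_left_mono) auto
  finally show ?thesis
    by simp
qed

lemma power_nat_ceiling_log_le:
  fixes n p q :: real
  assumes n: "1 \<le> n" and p: "0 < p" "p \<le> 1" and q: "0 < q" "q < 1"
  shows "p ^ nat \<lceil>ln n / ln (1 / q)\<rceil> \<le> n powr (ln p / ln (1 / q))"
proof -
  have "p ^ nat \<lceil>ln n / ln (1 / q)\<rceil> = p powr real (nat \<lceil>ln n / ln (1 / q)\<rceil>)"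
    using p by (simp add: powr_realpow)
  also have "\<dots> \<le> p powr (ln n / ln (1 / q))"
    using p by (intro powr_mono' real_nat_ceiling_ge) auto
  also have "\<dots> = n powr (ln p / ln (1 / q))"
    using p n by (simp add: powr_def)
  finally show ?thesis .
qed

lemma mult_power_nat_ceiling_log_le_1:
  fixes n q :: real
  assumes n: "1 \<le> n" and q: "0 < q" "q < 1"
  shows "n * q ^ nat \<lceil>ln n / ln (1 / q)\<rceil> \<le> 1"
proof -
  have "ln q / ln (1 / q) = -1"
    using q by (simp add: ln_div)
  then have "q ^ nat \<lceil>ln n / ln (1 / q)\<rceil> \<le> 1 / n"
    using power_nat_ceiling_log_le[OF n q(1) less_imp_le[OF q(2)] q] n by (simp add: powr_minus_divide)
  then show ?thesis
    using n by (simp add: field_simps)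
qed

lemma num_tables_le:
  fixes n c M :: real
  assumes n: "1 \<le> n" and c: "0 < c" and M: "1 \<le> M"
  shows "real (nat \<lceil>c * ln n\<rceil>) * real (nat \<lceil>M\<rceil>) \<le> 2 * (c + 1) * (1 + ln n) * M"
proof -
  have "0 \<le> ln n"
    using n by simp
  then have "0 \<le> c * ln n"
    using c by simp
  then have "real (nat \<lceil>c * ln n\<rceil>) \<le> c * ln n + 1"
    by linarith
  also have "\<dots> \<le> (c + 1) * (1 + ln n)"
    using c \<open>0 \<le> ln n\<close> by (simp add: algebra_simps)
  finally have "real (nat \<lceil>c * ln n\<rceil>) \<le> (c + 1) * (1 + ln n)" .
  moreover have "real (nat \<lceil>M\<rceil>) \<le> 2 * M"
    using M by linarith
  ultimately have "real (nat \<lceil>c * ln n\<rceil>) * real (nat \<lceil>M\<rceil>) \<le> ((c + 1) * (1 + ln n)) * (2 * M)"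
    using n c by (intro mult_mono) auto
  then show ?thesis
    by (simp add: algebra_simps)
qed

lemma hash_length_plus_2_le:
  fixes n lq :: real
  assumes n: "1 \<le> n" and lq: "0 < lq"
  shows "real (nat \<lceil>ln n / lq\<rceil>) + 2 \<le> 3 * (1 + ln n) * (1 / lq + 1)"
proof -
  define x where "x = (1 + ln n) / lq"
  have "real (nat \<lceil>ln n / lq\<rceil>) \<le> ln n / lq + 1" "ln n / lq \<le> x" "0 \<le> x" "0 \<le> ln n"
    using n lq by (simp_all add: x_def divide_right_mono)
  moreover have "3 * (1 + ln n) * (1 / lq + 1) = 3 * x + 3 * (1 + ln n)"
    using lq by (simp add: x_def field_simps)
  ultimately show ?thesis
    by (simp only:) argo
qed

lemma powr_mult_power_nat_ceiling_log_le:
  fixes n p0 p1 p2 :: real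
  assumes n: "1 \<le> n" and p0: "0 < p0" "p0 \<le> 1" and p1: "0 < p1" "p1 < 1" and p2: "0 < p2" "p2 < 1"
  shows "n powr (ln p1 / ln p2) * p0 ^ nat \<lceil>ln n / ln (1 / p2)\<rceil>
    \<le> n powr (ln p1 / ln p2 * (1 - ln p0 / ln p1))"
proof -
  have "n powr (ln p1 / ln p2) * p0 ^ nat \<lceil>ln n / ln (1 / p2)\<rceil>
      \<le> n powr (ln p1 / ln p2) * n powr (ln p0 / ln (1 / p2))"
    using power_nat_ceiling_log_le[OF n p0 p2] by (intro mult_left_mono) auto
  also have "\<dots> = n powr (ln p1 / ln p2 + ln p0 / ln (1 / p2))"
    by (simp add: powr_add)
  also have "ln p1 / ln p2 + ln p0 / ln (1 / p2) = ln p1 / ln p2 * (1 - ln p0 / ln p1)"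
    using p1 p2 by (simp add: ln_div field_simps)
  finally show ?thesis .
qed

lemma cost_parameters_le:
  fixes n p0 p1 p2 c S \<epsilon> :: real
  assumes n: "1 \<le> n" and p0: "0 < p0" "p0 \<le> 1" and p1: "0 < p1" "p1 < 1" and p2: "0 < p2" "p2 < 1"
    and c: "0 < c" and S: "0 \<le> S" and \<epsilon>: "0 < \<epsilon>"
  defines "\<rho> \<equiv> ln p1 / ln p2"
  defines "\<alpha> \<equiv> \<rho> * (1 - ln p0 / ln p1)"
    and "k \<equiv> nat \<lceil>ln n / ln (1 / p2)\<rceil>"
    and "L \<equiv> nat \<lceil>n powr \<rho> / p1\<rceil>"
    and "R \<equiv> nat \<lceil>c * ln n\<rceil>"
  shows "real R * real L * (real k + 2 + 2 * S * p0 ^ k)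
     \<le> 6 * (c + 1) * (1 + ln (n + 1 / \<epsilon>)) powr 2 *
        (n powr \<rho> / p1 * (1 / ln (1 / p2) + 1) + n powr \<alpha> / p1 * S)"
proof -
  define X where "X = 1 + ln n"
  define A where "A = n powr \<rho> / p1 * (1 / ln (1 / p2) + 1)"
  define B where "B = n powr \<alpha> / p1 * S"
  have X: "1 \<le> X" and A: "0 \<le> A" and B: "0 \<le> B"
    using n p1 p2 S by (simp_all add: X_def A_def B_def)
  have "0 \<le> \<rho>"
    using p1 p2 by (simp add: \<rho>_def divide_nonpos_neg less_imp_le)
  then have "1 \<le> n powr \<rho>"
    using n by (simp add: ge_one_powr_ge_zero)
  then have "1 \<le> n powr \<rho> / p1"
    using p1 by (simp add: le_divide_eq)
  then have RL: "real R * real L \<le> 2 * (c + 1) * X * (n powr \<rho> / p1)"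
    unfolding R_def L_def X_def by (rule num_tables_le[OF n c])
  have k2: "0 \<le> real k + 2"
    by simp
  have "real R * real L * (real k + 2) \<le> (2 * (c + 1) * X * (n powr \<rho> / p1)) * (3 * X * (1 / ln (1 / p2) + 1))"
    using hash_length_plus_2_le[OF n, of "ln (1 / p2)"] p1 p2 X c
    by (intro mult_mono[OF RL _ _ k2]) (auto simp: k_def X_def)
  also have "\<dots> = 6 * (c + 1) * X ^ 2 * A"
    by (simp add: A_def power2_eq_square algebra_simps)
  finally have near: "real R * real L * (real k + 2) \<le> 6 * (c + 1) * X ^ 2 * A" .
  have "real R * real L * (2 * S * p0 ^ k) \<le> (2 * (c + 1) * X * (n powr \<rho> / p1)) * (2 * S * p0 ^ k)"
    using RL S p0 by (intro mult_right_mono) auto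
  also have "\<dots> = 4 * (c + 1) * X * S / p1 * (n powr \<rho> * p0 ^ k)"
    by (simp add: field_simps)
  also have "\<dots> \<le> 4 * (c + 1) * X * S / p1 * n powr \<alpha>"
    using powr_mult_power_nat_ceiling_log_le[OF n p0 p1 p2] c X S p1
    by (intro mult_left_mono) (auto simp: k_def \<rho>_def \<alpha>_def)
  also have "\<dots> = 4 * X * ((c + 1) * B)"
    by (simp add: B_def)
  also have "\<dots> \<le> 6 * X ^ 2 * ((c + 1) * B)"
    using X c B by (intro mult_right_mono) (auto simp: power2_eq_square)
  also have "\<dots> = 6 * (c + 1) * X ^ 2 * B"
    by simp
  finally have far: "real R * real L * (2 * S * p0 ^ k) \<le> 6 * (c + 1) * X ^ 2 * B" .
  have "X \<le> 1 + ln (n + 1 / \<epsilon>)"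
    using n \<epsilon> by (simp add: X_def add_pos_pos)
  then have "X ^ 2 \<le> (1 + ln (n + 1 / \<epsilon>)) powr 2"
    using X by (subst powr_numeral) (auto intro: power_mono)
  then have "6 * (c + 1) * X ^ 2 * (A + B) \<le> 6 * (c + 1) * (1 + ln (n + 1 / \<epsilon>)) powr 2 * (A + B)"
    using A B c by (intro mult_right_mono mult_left_mono) auto
  with near far show ?thesis
    by (simp add: A_def B_def distrib_left)
qed

section \<open>The collision probability Phi\<close>

locale stable_lsh =
  fixes s w :: real and D :: "real measure" and f :: "real \<Rightarrow> real"
  assumes s_pos: "0 < s" and stable: "s_stable s D" and density: "abs_density D f"
    and w_pos: "0 < w"
begin

lemma prob_space_D: "prob_space D"
  using stable unfolding s_stable_def by auto

sublocale D: prob_space D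
  by (rule prob_space_D)

lemma sets_D [measurable_cong]: "sets D = sets borel"
  using stable unfolding s_stable_def by auto

lemma space_D: "space D = UNIV"
  using sets_eq_imp_space_eq[OF sets_D] by simp

lemma stable_distr:
  fixes m :: nat and \<alpha> :: "nat \<Rightarrow> real"
  shows "distr (PiM {..<m} (\<lambda>_. D)) borel (\<lambda>x. \<Sum>i<m. \<alpha> i * x i)
     = distr D borel (\<lambda>x. (\<Sum>i<m. \<bar>\<alpha> i\<bar> powr s) powr (1 / s) * x)"
  using stable unfolding s_stable_def by (elim conjE allE)

lemma f_measurable [measurable]: "f \<in> borel_measurable borel"
  and f_nonneg: "0 \<le> f t"
  and distr_abs_D: "distr D borel abs = density lborel (\<lambda>t. ennreal (f t))"
  using density unfolding abs_density_def by auto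

text \<open>Phi in the form in which it arises: given the projection a \<bullet> (x - y), whose law is that of
  l X, the random offset b makes x and y collide with probability max 0 (1 - l |X| / w).\<close>
definition collision_prob :: "real \<Rightarrow> ennreal" where
  "collision_prob l = (\<integral>\<^sup>+ x. ennreal (max 0 (1 - l * \<bar>x\<bar> / w)) \<partial>D)"

lemma collision_prob_le_1:
  assumes "0 \<le> l"
  shows "collision_prob l \<le> 1"
proof -
  have "collision_prob l \<le> (\<integral>\<^sup>+ x. 1 \<partial>D)"
    unfolding collision_prob_def by (intro nn_integral_mono) (use w_pos assms in auto)
  then show ?thesis by (simp add: D.emeasure_space_1)
qed

lemma collision_prob_antimono:
  assumes "0 \<le> l" "l \<le> l'"
  shows "collision_prob l' \<le> collision_prob l"
  unfolding collision_prob_def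
proof (intro nn_integral_mono ennreal_leI max.mono order.refl diff_left_mono divide_right_mono)
  fix x show "l * \<bar>x\<bar> \<le> l' * \<bar>x\<bar>" using assms by (simp add: mult_right_mono)
qed (use w_pos in simp)

lemma Phi_eq_collision_prob:
  assumes l: "0 < l"
  shows "ennreal (Phi f w l) = collision_prob l"
proof -
  define g where "g t = indicator {0..w} t * ((1/l) * f (t/l) * (1 - t/w))" for t :: real
  define h where "h u = indicator {0..w} (l*u) * (1 - l*u/w)" for u :: real
  have g_nonneg: "0 \<le> g t" for t
    using f_nonneg[of "t/l"] l w_pos
    by (auto simp: g_def indicator_def field_simps intro: mult_right_mono)
  have h_nonneg: "0 \<le> h t" for t
    using l w_pos by (auto simp: h_def indicator_def field_simps)
  have [measurable]: "g \<in> borel_measurable borel" "h \<in> borel_measurable borel"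
    unfolding g_def h_def by measurable
  have h_abs: "h \<bar>x\<bar> = max 0 (1 - l * \<bar>x\<bar> / w)" for x
    using l w_pos by (auto simp: h_def indicator_def field_simps)
  have "(\<integral>\<^sup>+ t. ennreal (g t) \<partial>lborel) = ennreal \<bar>l\<bar> * (\<integral>\<^sup>+ u. ennreal (g (0 + l * u)) \<partial>lborel)"
    by (rule nn_integral_real_affine) (use l in auto)
  also have "\<dots> = (\<integral>\<^sup>+ u. ennreal (f u) * ennreal (h u) \<partial>lborel)"
  proof -
    have "\<bar>l\<bar> * g (0 + l * u) = f u * h u" for u
      using l by (simp add: g_def h_def)
    then have "ennreal \<bar>l\<bar> * ennreal (g (0 + l * u)) = ennreal (f u) * ennreal (h u)" for u
      using l f_nonneg[of u] h_nonneg[of u] g_nonneg[of "l*u"] by (simp add: ennreal_mult[symmetric])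
    then show ?thesis by (simp add: nn_integral_cmult[symmetric])
  qed
  also have "\<dots> = (\<integral>\<^sup>+ u. ennreal (h u) \<partial>distr D borel abs)"
    by (simp add: distr_abs_D nn_integral_density)
  also have "\<dots> = collision_prob l"
    by (subst nn_integral_distr) (auto simp: collision_prob_def h_abs)
  finally have eq: "(\<integral>\<^sup>+ t. ennreal (g t) \<partial>lborel) = collision_prob l" .
  have "integrable lborel g"
    using eq collision_prob_le_1[of l] l g_nonneg
    by (intro integrableI_nonneg) (auto simp: top_unique less_top[symmetric])
  then have "(\<integral>\<^sup>+ t. ennreal (g t) \<partial>lborel) = ennreal (integral\<^sup>L lborel g)"
    by (rule nn_integral_eq_integral) (use g_nonneg in auto)
  moreover have "Phi f w l = integral\<^sup>L lborel g"
    unfolding Phi_def set_lebesgue_integral_def g_def by simp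
  ultimately show ?thesis using eq by simp
qed

text \<open>For independent X, Y with law D, X - Y has the law of 2^(1/s) X.\<close>
lemma mass_near_zero:
  assumes \<delta>: "0 < \<delta>"
  shows "0 < emeasure D {x. \<bar>x\<bar> < \<delta>}"
proof -
  define \<alpha> where "\<alpha> i = (if i = (0::nat) then 1 else -1::real)" for i
  define K :: real where "K = 2 powr (1 / s)"
  define M where "M = PiM {..<2::nat} (\<lambda>_. D)"
  have K: "0 < K"
    by (simp add: K_def)
  have diff_measurable [measurable]: "(\<lambda>x. x 0 - x 1) \<in> borel_measurable M"
    unfolding M_def by measurable
  have law: "distr M borel (\<lambda>x. x 0 - x 1) = distr D borel (\<lambda>x. K * x)"
    using stable_distr[of 2 \<alpha>] by (simp add: M_def \<alpha>_def K_def numeral_2_eq_2)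
  have "0 < emeasure M {x \<in> space M. \<bar>x 0 - x 1\<bar> < K * \<delta>}"
    unfolding M_def using K \<delta> by (intro PiM_abs_diff_less_pos prob_space_D sets_D) simp
  also have "\<dots> = emeasure (distr M borel (\<lambda>x. x 0 - x 1)) {z. \<bar>z\<bar> < K * \<delta>}"
    using emeasure_distr[OF diff_measurable, of "{z. \<bar>z\<bar> < K * \<delta>}"]
    by (simp add: vimage_def Int_def conj_commute)
  also have "\<dots> = emeasure D {x. \<bar>K * x\<bar> < K * \<delta>}"
    unfolding law by (subst emeasure_distr) (auto simp: vimage_def space_D)
  also have "{x. \<bar>K * x\<bar> < K * \<delta>} = {x. \<bar>x\<bar> < \<delta>}"
    using K by (auto simp: abs_mult)
  finally show ?thesis .
qed

lemma AE_nonzero: "AE x in D. x \<noteq> 0"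
proof -
  have "AE x in density lborel (\<lambda>t. ennreal (f t)). x \<noteq> 0"
    using AE_lborel_singleton[of 0] by (subst AE_density) (auto elim: AE_mp)
  then have "AE x in D. \<bar>x\<bar> \<noteq> 0"
    unfolding distr_abs_D[symmetric] by (rule AE_distrD[rotated]) simp
  then show ?thesis
    by simp
qed

lemma collision_prob_less_1:
  assumes l: "0 < l"
  shows "collision_prob l < 1"
proof (rule ccontr)
  assume "\<not> collision_prob l < 1"
  then have one: "collision_prob l = 1"
    using collision_prob_le_1[of l] l by (simp add: not_less)
  define u where "u x = ennreal (max 0 (1 - l * \<bar>x\<bar> / w))" for x
  define v where "v x = ennreal (min 1 (l * \<bar>x\<bar> / w))" for x
  have [measurable]: "u \<in> borel_measurable D" "v \<in> borel_measurable D"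
    unfolding u_def v_def by measurable
  have "u x + v x = 1" for x
  proof -
    have "max 0 (1 - l * \<bar>x\<bar> / w) + min 1 (l * \<bar>x\<bar> / w) = 1"
      by linarith
    then show ?thesis
      using l w_pos unfolding u_def v_def by (subst ennreal_plus[symmetric]) auto
  qed
  then have "(\<integral>\<^sup>+ x. u x \<partial>D) + (\<integral>\<^sup>+ x. v x \<partial>D) = 1"
    by (simp add: nn_integral_add[symmetric] D.emeasure_space_1)
  then have "(\<integral>\<^sup>+ x. v x \<partial>D) = 0"
    using one ennreal_add_left_cancel[of 1 _ 0] by (simp add: collision_prob_def u_def)
  then have "AE x in D. v x = 0"
    by (subst (asm) nn_integral_0_iff_AE) auto
  with AE_nonzero have "AE x in D. False"
  proof eventually_elim
    case (elim x)
    then show False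
      using l w_pos by (auto simp: v_def min_def split: if_splits)
  qed
  then show False
    by (simp add: D.AE_False)
qed

lemma collision_prob_pos:
  assumes l: "0 < l"
  shows "0 < collision_prob l"
proof -
  define \<delta> where "\<delta> = w / (2 * l)"
  have "ennreal (1/2) * indicator {x. \<bar>x\<bar> < \<delta>} x \<le> ennreal (max 0 (1 - l * \<bar>x\<bar> / w))" for x
  proof (cases "\<bar>x\<bar> < \<delta>")
    case True
    then have "l * \<bar>x\<bar> < w / 2"
      using l by (simp add: \<delta>_def field_simps)
    then have "ennreal (1/2) \<le> ennreal (max 0 (1 - l * \<bar>x\<bar> / w))"
      using w_pos by (intro ennreal_leI) (simp add: field_simps)
    moreover have "ennreal (1/2) * indicator {x. \<bar>x\<bar> < \<delta>} x = ennreal (1/2)"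
      using True by simp
    ultimately show ?thesis
      by (simp only:)
  qed simp
  then have "ennreal (1/2) * emeasure D {x. \<bar>x\<bar> < \<delta>} \<le> collision_prob l"
    unfolding collision_prob_def
    by (subst nn_integral_cmult_indicator[symmetric]) (auto intro: nn_integral_mono simp: sets_D)
  moreover have "0 < emeasure D {x. \<bar>x\<bar> < \<delta>}"
    using l w_pos by (intro mass_near_zero) (simp add: \<delta>_def)
  then have "0 < ennreal (1/2) * emeasure D {x. \<bar>x\<bar> < \<delta>}"
    by (simp add: ennreal_zero_less_mult_iff del: ennreal_half)
  ultimately show ?thesis
    by (rule order.strict_trans2[rotated])
qed

lemma Phi_pos: "0 < l \<Longrightarrow> 0 < Phi f w l"
  using collision_prob_pos Phi_eq_collision_prob by (metis ennreal_less_zero_iff)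

lemma Phi_less_1: "0 < l \<Longrightarrow> Phi f w l < 1"
  using collision_prob_less_1 Phi_eq_collision_prob by (metis ennreal_less_one_iff)

lemma Phi_antimono:
  assumes "0 < l" "l \<le> l'"
  shows "Phi f w l' \<le> Phi f w l"
proof -
  have "ennreal (Phi f w l') \<le> ennreal (Phi f w l)"
    using collision_prob_antimono[of l l'] assms by (simp add: Phi_eq_collision_prob)
  then show ?thesis
    using Phi_pos[of l] assms by (simp add: ennreal_le_iff)
qed

lemma Phi_parameter_bounds:
  assumes \<epsilon>: "0 < \<epsilon>"
  defines "p0 \<equiv> Phi f w (1 / (1 + \<epsilon>))"
    and "p1 \<equiv> Phi f w 1"
    and "p2 \<equiv> Phi f w (((1 + \<epsilon>) powr s + (1 + \<epsilon>) powr (- s) - 1) powr (1 / s))"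
  shows "0 < p0" "p0 \<le> 1" "0 < p1" "p1 < 1" "0 < p2" "p2 < 1"
  using Phi_pos Phi_less_1 far_threshold_pos[OF s_pos \<epsilon>] \<epsilon>
  by (auto simp: p0_def p1_def p2_def less_imp_le)

section \<open>Expected cost of a query\<close>

lemma prob_space_hash_measure: "prob_space (hash_measure D d w)"
  unfolding hash_measure_def
  by (intro prob_space_pair prob_space_PiM prob_space_D prob_space_uniform_measure) (use w_pos in auto)

lemma hash_collision_sets [measurable]:
  "{ab \<in> space (hash_measure D d w). hashval w d ab x = hashval w d ab y} \<in> sets (hash_measure D d w)"
  unfolding hashval_def hash_measure_def by measurable

lemma hash_collision_le:
  fixes x y :: "nat \<Rightarrow> real"
  shows "emeasure (hash_measure D d w) {ab \<in> space (hash_measure D d w). hashval w d ab x = hashval w d ab y}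
    \<le> collision_prob ((\<Sum>i<Suc d. \<bar>x i - y i\<bar> powr s) powr (1 / s))"
proof -
  define l where "l = (\<Sum>i<Suc d. \<bar>x i - y i\<bar> powr s) powr (1 / s)"
  define M where "M = PiM {..<Suc d} (\<lambda>_. D)"
  define U where "U = uniform_measure lborel {0..<w}"
  define X where "X = {ab \<in> space (M \<Otimes>\<^sub>M U). hashval w d ab x = hashval w d ab y}"
  define h where "h z = ennreal (max 0 (1 - \<bar>z\<bar> / w))" for z :: real
  have [measurable]: "h \<in> borel_measurable borel"
    unfolding h_def by measurable
  interpret U: prob_space U
    unfolding U_def by (rule prob_space_uniform_measure) (use w_pos in auto)
  have "emeasure (M \<Otimes>\<^sub>M U) X = (\<integral>\<^sup>+ a. emeasure U (Pair a -` X) \<partial>M)"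
    by (rule U.emeasure_pair_measure_alt) (unfold X_def M_def U_def hashval_def, measurable)
  also have "\<dots> \<le> (\<integral>\<^sup>+ a. h (\<Sum>i<Suc d. (x i - y i) * a i) \<partial>M)"
  proof (rule nn_integral_mono)
    fix a
    define u where "u = (\<Sum>i<Suc d. a i * x i)"
    define v where "v = (\<Sum>i<Suc d. a i * y i)"
    have "emeasure U (Pair a -` X) \<le> emeasure U {b. \<lfloor>(u + b) / w\<rfloor> = \<lfloor>(v + b) / w\<rfloor>}"
      by (intro emeasure_mono) (auto simp: X_def hashval_def u_def v_def U_def)
    also have "\<dots> \<le> ennreal (max 0 (1 - \<bar>u - v\<bar> / w))"
      unfolding U_def by (rule uniform_floor_collision_le[OF w_pos])
    also have "u - v = (\<Sum>i<Suc d. (x i - y i) * a i)"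
      by (simp add: u_def v_def sum_subtractf[symmetric] algebra_simps)
    finally show "emeasure U (Pair a -` X) \<le> h (\<Sum>i<Suc d. (x i - y i) * a i)"
      by (simp add: h_def)
  qed
  also have "\<dots> = (\<integral>\<^sup>+ z. h z \<partial>distr M borel (\<lambda>a. \<Sum>i<Suc d. (x i - y i) * a i))"
    by (rule nn_integral_distr[symmetric]) (auto simp: M_def)
  also have "\<dots> = (\<integral>\<^sup>+ t. h (l * t) \<partial>D)"
    unfolding M_def stable_distr l_def by (rule nn_integral_distr) auto
  also have "\<dots> = collision_prob l"
    unfolding collision_prob_def h_def l_def by (simp add: abs_mult)
  finally show ?thesis
    by (simp add: hash_measure_def X_def M_def U_def l_def)
qed

definition concat_collision ::
  "nat \<Rightarrow> nat \<Rightarrow> (nat \<Rightarrow> real) \<Rightarrow> (nat \<Rightarrow> real) \<Rightarrow> (nat \<Rightarrow> (nat \<Rightarrow> real) \<times> real) set" where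
  "concat_collision d k x y = {H \<in> space (PiM {..<k} (\<lambda>_. hash_measure D d w)).
     \<forall>m<k. hashval w d (H m) x = hashval w d (H m) y}"

lemma concat_collision_PiE:
  "concat_collision d k x y
    = PiE {..<k} (\<lambda>_. {ab \<in> space (hash_measure D d w). hashval w d ab x = hashval w d ab y})"
  by (auto simp: concat_collision_def space_PiM PiE_iff extensional_def)

lemma concat_collision_sets [measurable]:
  "concat_collision d k x y \<in> sets (PiM {..<k} (\<lambda>_. hash_measure D d w))"
  unfolding concat_collision_PiE
  by (rule sets_PiM_I_finite) (auto simp del: lessThan_iff)

lemma concat_collision_le:
  fixes x y :: "nat \<Rightarrow> real"
  shows "emeasure (PiM {..<k} (\<lambda>_. hash_measure D d w)) (concat_collision d k x y)
    \<le> collision_prob ((\<Sum>i<Suc d. \<bar>x i - y i\<bar> powr s) powr (1 / s)) ^ k"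
proof -
  interpret hash: prob_space "hash_measure D d w"
    by (rule prob_space_hash_measure)
  interpret product_prob_space "\<lambda>_::nat. hash_measure D d w"
    by unfold_locales
  have "emeasure (PiM {..<k} (\<lambda>_. hash_measure D d w)) (concat_collision d k x y)
    = (\<Prod>m<k. emeasure (hash_measure D d w)
        {ab \<in> space (hash_measure D d w). hashval w d ab x = hashval w d ab y})"
    unfolding concat_collision_PiE
    by (rule emeasure_PiM) auto
  also have "\<dots> \<le> collision_prob ((\<Sum>i<Suc d. \<bar>x i - y i\<bar> powr s) powr (1 / s)) ^ k"
    by (rule order.trans[OF prod_mono_ennreal[OF hash_collision_le]]) simp
  finally show ?thesis .
qed

text \<open>Linearity of expectation: each of the R L tables holds an independent copy of g.\<close>
lemma expected_query_cost:
  fixes R L k d :: nat and P :: "(nat \<Rightarrow> real) set" and P' :: "(nat \<Rightarrow> real) \<Rightarrow> (nat \<Rightarrow> real)"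
  assumes P: "finite P"
  shows "(\<integral>\<^sup>+ H. ennreal (real (R * L * k) +
            (\<Sum>ij\<in>{..<R} \<times> {..<L}.
               real (card {p \<in> P. \<forall>m<k. hashval w d (H ij m) (P' p) = hashval w d (H ij m) q'})))
        \<partial>(PiM ({..<R} \<times> {..<L}) (\<lambda>_. PiM {..<k} (\<lambda>_. hash_measure D d w))))
     = ennreal (real (R * L * k)) + of_nat (R * L) *
         (\<Sum>p\<in>P. emeasure (PiM {..<k} (\<lambda>_. hash_measure D d w)) (concat_collision d k (P' p) q'))"
proof -
  define N where "N = PiM {..<k} (\<lambda>_. hash_measure D d w)"
  define I where "I = {..<R} \<times> {..<L}"
  define M where "M = PiM I (\<lambda>_. N)"
  define S where "S p = concat_collision d k (P' p) q'" for p
  have S_sets [measurable]: "S p \<in> sets N" for p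
    unfolding S_def N_def by (rule concat_collision_sets)
  interpret N: prob_space N
    unfolding N_def by (intro prob_space_PiM prob_space_hash_measure)
  interpret M: prob_space M
    unfolding M_def by (intro prob_space_PiM N.prob_space_axioms)
  have indicator_measurable [measurable]:
    "ij \<in> I \<Longrightarrow> (\<lambda>H. indicator (S p) (H ij) :: ennreal) \<in> borel_measurable M" for p ij
    unfolding M_def by measurable
  have table: "(\<integral>\<^sup>+ H. indicator (S p) (H ij) \<partial>M) = emeasure N (S p)" if "ij \<in> I" for ij p
    unfolding M_def using that by (intro nn_integral_indicator_PiM_component N.prob_space_axioms S_sets)
  have count: "ennreal (real (R * L * k) +
        (\<Sum>ij\<in>I. real (card {p \<in> P. \<forall>m<k. hashval w d (H ij m) (P' p) = hashval w d (H ij m) q'})))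
      = ennreal (real (R * L * k)) + (\<Sum>ij\<in>I. \<Sum>p\<in>P. indicator (S p) (H ij))"
    if H: "H \<in> space M" for H
  proof -
    have "H ij \<in> space N" if "ij \<in> I" for ij
      using H that by (auto simp: M_def space_PiM)
    then have "{p \<in> P. \<forall>m<k. hashval w d (H ij m) (P' p) = hashval w d (H ij m) q'} = {p \<in> P. H ij \<in> S p}"
      if "ij \<in> I" for ij
      using that by (auto simp: S_def concat_collision_def N_def)
    then show ?thesis
      using card_filter_ennreal[OF P]
      by (simp add: ennreal_plus sum_nonneg sum_ennreal[symmetric] indicator_def cong: sum.cong)
  qed
  have "(\<integral>\<^sup>+ H. ennreal (real (R * L * k) +
        (\<Sum>ij\<in>I. real (card {p \<in> P. \<forall>m<k. hashval w d (H ij m) (P' p) = hashval w d (H ij m) q'}))) \<partial>M)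
      = (\<integral>\<^sup>+ H. ennreal (real (R * L * k)) + (\<Sum>ij\<in>I. \<Sum>p\<in>P. indicator (S p) (H ij)) \<partial>M)"
    by (rule nn_integral_cong) (rule count)
  also have "\<dots> = ennreal (real (R * L * k)) + (\<Sum>ij\<in>I. \<Sum>p\<in>P. \<integral>\<^sup>+ H. indicator (S p) (H ij) \<partial>M)"
    by (simp add: nn_integral_add nn_integral_sum M.emeasure_space_1)
  also have "\<dots> = ennreal (real (R * L * k)) + of_nat (R * L) * (\<Sum>p\<in>P. emeasure N (S p))"
    by (simp add: table I_def card_cartesian_product)
  finally show ?thesis
    unfolding I_def M_def N_def S_def .
qed

lemma A_query_cost_le:
  fixes d :: nat and P :: "(nat \<Rightarrow> real) set" and q :: "nat \<Rightarrow> real" and \<epsilon> r c :: real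
  assumes P: "finite P" and \<epsilon>: "0 < \<epsilon>" and r: "0 < r"
  defines "n \<equiv> real (card P)"
    and "p2 \<equiv> Phi f w (((1 + \<epsilon>) powr s + (1 + \<epsilon>) powr (- s) - 1) powr (1 / s))"
  defines "k \<equiv> nat \<lceil>ln n / ln (1 / p2)\<rceil>"
    and "L \<equiv> nat \<lceil>n powr (ln (Phi f w 1) / ln p2) / Phi f w 1\<rceil>"
    and "R \<equiv> nat \<lceil>c * ln n\<rceil>"
  shows "A_query_cost s D f w c d P \<epsilon> r q
    \<le> ennreal (real (R * L * k) + real (R * L) * (\<Sum>p\<in>P. Phi f w (lifted_dist s \<epsilon> r (ldist s d q p)) ^ k))"
proof -
  define r' where "r' = r * (1 + 1 / ((1 + \<epsilon>) powr s - 1)) powr (1 / s)"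
  define h where "h = r / ((1 + \<epsilon>) powr s - 1) powr (1 / s)"
  define N where "N = PiM {..<k} (\<lambda>_. hash_measure D d w)"
  define \<phi> where "\<phi> p = Phi f w (lifted_dist s \<epsilon> r (ldist s d q p))" for p
  note lifted_pos = lifted_dist_pos[OF s_pos \<epsilon> r]
  have collision: "emeasure N (concat_collision d k (rescale r' (lift d 0 p)) (rescale r' (lift d h q)))
      \<le> ennreal (\<phi> p ^ k)" for p
  proof -
    have "emeasure N (concat_collision d k (rescale r' (lift d 0 p)) (rescale r' (lift d h q)))
        \<le> collision_prob (lifted_dist s \<epsilon> r (ldist s d q p)) ^ k"
      using concat_collision_le[of k d "rescale r' (lift d 0 p)" "rescale r' (lift d h q)"]
      unfolding N_def r'_def h_def lift_rescale_dist[OF s_pos \<epsilon> r] .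
    then show ?thesis
      using less_imp_le[OF Phi_pos[OF lifted_pos]]
      by (simp add: \<phi>_def Phi_eq_collision_prob[OF lifted_pos, symmetric] ennreal_power)
  qed
  have "A_query_cost s D f w c d P \<epsilon> r q =
    (\<integral>\<^sup>+ H. ennreal (real (R * L * k) +
            (\<Sum>ij\<in>{..<R} \<times> {..<L}. real (card {p \<in> P. \<forall>m<k.
               hashval w d (H ij m) (rescale r' (lift d 0 p)) = hashval w d (H ij m) (rescale r' (lift d h q))})))
        \<partial>(PiM ({..<R} \<times> {..<L}) (\<lambda>_. N)))"
    unfolding A_query_cost_def Let_def r'_def h_def R_def L_def k_def n_def p2_def N_def by simp
  also have "\<dots> = ennreal (real (R * L * k)) + of_nat (R * L) *
          (\<Sum>p\<in>P. emeasure N (concat_collision d k (rescale r' (lift d 0 p)) (rescale r' (lift d h q))))"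
    unfolding N_def by (rule expected_query_cost[OF P])
  also have "\<dots> \<le> ennreal (real (R * L * k)) + of_nat (R * L) * (\<Sum>p\<in>P. ennreal (\<phi> p ^ k))"
    by (intro add_left_mono mult_left_mono sum_mono collision) simp
  also have "\<dots> = ennreal (real (R * L * k) + real (R * L) * (\<Sum>p\<in>P. \<phi> p ^ k))"
    using Phi_pos[OF lifted_pos]
    by (simp add: \<phi>_def sum_ennreal ennreal_of_nat_eq_real_of_nat ennreal_mult'' ennreal_plus
        sum_nonneg less_imp_le del: of_nat_mult)
  finally show ?thesis
    by (simp add: \<phi>_def)
qed

lemma Phi_lifted_dist_bounds:
  assumes \<epsilon>: "0 < \<epsilon>" and r: "0 < r"
  shows "0 < Phi f w (lifted_dist s \<epsilon> r t)" "Phi f w (lifted_dist s \<epsilon> r t) \<le> Phi f w (1 / (1 + \<epsilon>))"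
  using Phi_pos[OF lifted_dist_pos[OF s_pos \<epsilon> r]] \<epsilon>
    Phi_antimono[OF _ lifted_dist_ge[OF s_pos \<epsilon> r]] by auto

text \<open>Once r overestimates the nearest-neighbour distance by at most 1 + \<epsilon>, every point outside
  the \<epsilon>(2 + \<epsilon>)-NN set is far after lifting and collides with probability at most p2^k, and the
  choice of k makes these n terms sum to at most 1.\<close>
lemma sum_Phi_lifted_dist_le:
  fixes d :: nat and P :: "(nat \<Rightarrow> real) set" and q :: "nat \<Rightarrow> real" and \<epsilon> r :: real
  assumes P: "finite P" and Pq: "P - {q} \<noteq> {}" and \<epsilon>: "0 < \<epsilon>" and r: "0 < r"
    and good: "r \<le> (1 + \<epsilon>) * nn_dist s d P q"
  defines "n \<equiv> real (card P)"
    and "p0 \<equiv> Phi f w (1 / (1 + \<epsilon>))"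
    and "p2 \<equiv> Phi f w (((1 + \<epsilon>) powr s + (1 + \<epsilon>) powr (- s) - 1) powr (1 / s))"
    and "S \<equiv> approx_NN s d P (\<epsilon> * (2 + \<epsilon>)) q"
  defines "k \<equiv> nat \<lceil>ln n / ln (1 / p2)\<rceil>"
  shows "(\<Sum>p\<in>P. Phi f w (lifted_dist s \<epsilon> r (ldist s d q p)) ^ k) \<le> 1 + 2 * real (card S) * p0 ^ k"
proof -
  define \<phi> where "\<phi> p = Phi f w (lifted_dist s \<epsilon> r (ldist s d q p))" for p
  define l2 where "l2 = ((1 + \<epsilon>) powr s + (1 + \<epsilon>) powr (- s) - 1) powr (1 / s)"
  have l2: "0 < l2"
    unfolding l2_def by (rule far_threshold_pos[OF s_pos \<epsilon>])
  note p = Phi_parameter_bounds[OF \<epsilon>, folded p0_def p2_def]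
  note \<phi> = Phi_lifted_dist_bounds[OF \<epsilon> r, folded p0_def]
  have n: "1 \<le> n"
    using P Pq by (auto simp: n_def Suc_le_eq card_gt_0_iff)
  have S: "finite S" "1 \<le> card S"
    using P approx_NN_nonempty[OF P Pq, of "\<epsilon> * (2 + \<epsilon>)" s d] \<epsilon>
    by (auto simp: S_def approx_NN_def nbhd_def Suc_le_eq card_gt_0_iff)
  have bound: "\<phi> p ^ k \<le> (if p \<in> insert q S then p0 ^ k else p2 ^ k)" if "p \<in> P" for p
  proof (cases "p \<in> insert q S")
    case False
    then have "l2 \<le> lifted_dist s \<epsilon> r (ldist s d q p)"
      using lifted_dist_far[OF s_pos \<epsilon> r] far_point_dist[OF that _ _ good \<epsilon>] by (simp add: l2_def S_def)
    then show ?thesis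
      using False Phi_antimono[OF l2] \<phi> by (simp add: \<phi>_def p2_def l2_def power_mono less_imp_le)
  qed (use \<phi> in \<open>simp add: \<phi>_def power_mono less_imp_le\<close>)
  have "(\<Sum>p\<in>P. \<phi> p ^ k) \<le> p0 ^ k * (real (card S) + 1) + n * p2 ^ k"
    unfolding n_def using p by (intro sum_le_near_far[OF P S(1) _ _ bound]) auto
  also have "p0 ^ k * (real (card S) + 1) \<le> p0 ^ k * (2 * real (card S))"
    using S(2) p by (intro mult_left_mono) auto
  also have "n * p2 ^ k \<le> 1"
    unfolding k_def using n p(5,6) by (rule mult_power_nat_ceiling_log_le_1)
  finally show ?thesis
    by (simp add: \<phi>_def algebra_simps)
qed

lemma A_query_cost_le_split:
  fixes d :: nat and P :: "(nat \<Rightarrow> real) set" and q :: "nat \<Rightarrow> real" and \<epsilon> r c :: real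
  assumes P: "finite P" and Pq: "P - {q} \<noteq> {}" and \<epsilon>: "0 < \<epsilon>" and r: "0 < r"
  defines "n \<equiv> real (card P)"
    and "p0 \<equiv> Phi f w (1 / (1 + \<epsilon>))"
    and "p2 \<equiv> Phi f w (((1 + \<epsilon>) powr s + (1 + \<epsilon>) powr (- s) - 1) powr (1 / s))"
    and "S \<equiv> approx_NN s d P (\<epsilon> * (2 + \<epsilon>)) q"
  defines "k \<equiv> nat \<lceil>ln n / ln (1 / p2)\<rceil>"
    and "L \<equiv> nat \<lceil>n powr (ln (Phi f w 1) / ln p2) / Phi f w 1\<rceil>"
    and "R \<equiv> nat \<lceil>c * ln n\<rceil>"
  shows "A_query_cost s D f w c d P \<epsilon> r q
    \<le> ennreal (real R * real L * (real k + 1 + 2 * real (card S) * p0 ^ k))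
      + ennreal (real R * real L * n) * indicator (- {r. r \<le> (1 + \<epsilon>) * nn_dist s d P q}) r"
proof -
  define \<Sigma> where "\<Sigma> = (\<Sum>p\<in>P. Phi f w (lifted_dist s \<epsilon> r (ldist s d q p)) ^ k)"
  note p = Phi_parameter_bounds[OF \<epsilon>, folded p0_def p2_def]
  note \<phi> = Phi_lifted_dist_bounds[OF \<epsilon> r, folded p0_def]
  have cost: "A_query_cost s D f w c d P \<epsilon> r q \<le> ennreal (real R * real L * (real k + \<Sigma>))"
    using A_query_cost_le[OF P \<epsilon> r, of c d q]
    by (simp add: \<Sigma>_def R_def L_def k_def n_def p2_def algebra_simps)
  have "\<Sigma> \<le> 1 + 2 * real (card S) * p0 ^ k + (if r \<le> (1 + \<epsilon>) * nn_dist s d P q then 0 else n)"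
  proof (cases "r \<le> (1 + \<epsilon>) * nn_dist s d P q")
    case True
    then show ?thesis
      using sum_Phi_lifted_dist_le[OF P Pq \<epsilon> r True]
      by (simp add: \<Sigma>_def n_def p0_def p2_def S_def k_def)
  next
    case False
    have "\<Sigma> \<le> (\<Sum>p\<in>P. 1)"
      unfolding \<Sigma>_def using \<phi> p by (intro sum_mono power_le_one) (auto intro: less_imp_le order.trans)
    moreover have "0 \<le> 2 * real (card S) * p0 ^ k"
      using p by simp
    ultimately show ?thesis
      using False by (simp add: n_def)
  qed
  then have "real R * real L * (real k + \<Sigma>)
      \<le> real R * real L * (real k + 1 + 2 * real (card S) * p0 ^ k
          + (if r \<le> (1 + \<epsilon>) * nn_dist s d P q then 0 else n))"
    by (intro mult_left_mono) auto
  also have "\<dots> = real R * real L * (real k + 1 + 2 * real (card S) * p0 ^ k)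
        + real R * real L * n * indicator (- {r. r \<le> (1 + \<epsilon>) * nn_dist s d P q}) r"
    by (simp add: algebra_simps indicator_def)
  finally have "real R * real L * (real k + \<Sigma>)
      \<le> real R * real L * (real k + 1 + 2 * real (card S) * p0 ^ k)
        + real R * real L * n * indicator (- {r. r \<le> (1 + \<epsilon>) * nn_dist s d P q}) r" .
  with cost have "A_query_cost s D f w c d P \<epsilon> r q
      \<le> ennreal (real R * real L * (real k + 1 + 2 * real (card S) * p0 ^ k)
        + real R * real L * n * indicator (- {r. r \<le> (1 + \<epsilon>) * nn_dist s d P q}) r)"
    by (rule order.trans[OF _ ennreal_leI])
  also have "\<dots> = ennreal (real R * real L * (real k + 1 + 2 * real (card S) * p0 ^ k))
      + ennreal (real R * real L * n) * indicator (- {r. r \<le> (1 + \<epsilon>) * nn_dist s d P q}) r"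
    using p by (subst ennreal_plus) (auto simp: indicator_def n_def)
  finally show ?thesis .
qed

lemma step2_time_le:
  fixes d :: nat and P :: "(nat \<Rightarrow> real) set" and q :: "nat \<Rightarrow> real" and \<epsilon> c :: real
    and T :: "real pmf"
  assumes P: "finite P" and Pq: "P - {q} \<noteq> {}" and \<epsilon>: "0 < \<epsilon>" and c: "0 < c"
    and T_pos: "\<forall>r\<in>set_pmf T. 0 < r"
    and T_approx: "1 - 1 / real (card P)
      \<le> measure_pmf.prob T {r. nn_dist s d P q \<le> r \<and> r \<le> (1 + \<epsilon>) * nn_dist s d P q}"
  defines "n \<equiv> real (card P)"
    and "p0 \<equiv> Phi f w (1 / (1 + \<epsilon>))"
    and "p1 \<equiv> Phi f w 1"
    and "p2 \<equiv> Phi f w (((1 + \<epsilon>) powr s + (1 + \<epsilon>) powr (- s) - 1) powr (1 / s))"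
    and "S \<equiv> approx_NN s d P (\<epsilon> * (2 + \<epsilon>)) q"
  defines "\<rho> \<equiv> ln p1 / ln p2"
  shows "step2_time s D f w c d P \<epsilon> T q
    \<le> ennreal (6 * (c + 1) * (1 + ln (n + 1 / \<epsilon>)) powr 2 *
         (n powr \<rho> / p1 * (1 / ln (1 / p2) + 1)
          + n powr (\<rho> * (1 - ln p0 / ln p1)) / p1 * real (card S)))"
proof -
  define k where "k = nat \<lceil>ln n / ln (1 / p2)\<rceil>"
  define L where "L = nat \<lceil>n powr \<rho> / p1\<rceil>"
  define R where "R = nat \<lceil>c * ln n\<rceil>"
  define G where "G = {r. r \<le> (1 + \<epsilon>) * nn_dist s d P q}"
  note p = Phi_parameter_bounds[OF \<epsilon>, folded p0_def p1_def p2_def]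
  have n: "1 \<le> n"
    using P Pq by (auto simp: n_def Suc_le_eq card_gt_0_iff)
  have "measure_pmf.prob T {r. nn_dist s d P q \<le> r \<and> r \<le> (1 + \<epsilon>) * nn_dist s d P q} \<le> measure_pmf.prob T G"
    by (intro measure_pmf.finite_measure_mono) (auto simp: G_def)
  then have G: "1 - 1 / n \<le> measure_pmf.prob T G"
    using T_approx by (simp add: n_def)
  have "step2_time s D f w c d P \<epsilon> T q
      \<le> ennreal (real R * real L * (real k + 1 + 2 * real (card S) * p0 ^ k) + real R * real L * n * (1 / n))"
    unfolding step2_time_def
  proof (rule nn_integral_pmf_le_split[OF _ G])
    fix r assume "r \<in> set_pmf T"
    then show "A_query_cost s D f w c d P \<epsilon> r q
      \<le> ennreal (real R * real L * (real k + 1 + 2 * real (card S) * p0 ^ k))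
        + ennreal (real R * real L * n) * indicator (- G) r"
      using A_query_cost_le_split[OF P Pq \<epsilon>, of r c] T_pos
      by (simp add: G_def R_def L_def k_def n_def p0_def p1_def p2_def S_def \<rho>_def)
  qed (use p n in auto)
  also have "\<dots> = ennreal (real R * real L * (real k + 2 + 2 * real (card S) * p0 ^ k))"
    using n by (simp add: algebra_simps)
  also have "\<dots> \<le> ennreal (6 * (c + 1) * (1 + ln (n + 1 / \<epsilon>)) powr 2 *
         (n powr \<rho> / p1 * (1 / ln (1 / p2) + 1)
          + n powr (\<rho> * (1 - ln p0 / ln p1)) / p1 * real (card S)))"
    using cost_parameters_le[OF n p c _ \<epsilon>, of "real (card S)"]
    by (intro ennreal_leI) (simp add: k_def L_def R_def \<rho>_def)
  finally show ?thesis .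
qed

end

theorem lemma5:
  fixes s w c :: real and D :: "real measure" and f :: "real \<Rightarrow> real"
  assumes "0 < s" and "s \<le> 2" and "s_stable s D" and "abs_density D f"
    and "0 < w" and "0 < c"
  shows "\<exists>C e. 0 < C \<and>
    (\<forall>(d::nat) (P::(nat \<Rightarrow> real) set) (\<epsilon>::real) (q::nat \<Rightarrow> real) (T::real pmf).
       finite P \<and> P - {q} \<noteq> {} \<and> (\<forall>p\<in>P. \<forall>i\<ge>d. p i = 0) \<and> (\<forall>i\<ge>d. q i = 0) \<and> 0 < \<epsilon> \<and>
       finite (set_pmf T) \<and> (\<forall>r\<in>set_pmf T. 0 < r) \<and>
       measure_pmf.prob T {r. nn_dist s d P q \<le> r \<and> r \<le> (1 + \<epsilon>) * nn_dist s d P q}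
         \<ge> 1 - 1 / real (card P)
     \<longrightarrow> (let n = real (card P);
              p0 = Phi f w (1 / (1 + \<epsilon>));
              p1 = Phi f w 1;
              p2' = Phi f w (((1 + \<epsilon>) powr s + (1 + \<epsilon>) powr (- s) - 1) powr (1 / s));
              \<rho>' = ln p1 / ln p2';
              \<alpha> = \<rho>' * (1 - ln p0 / ln p1)
          in step2_time s D f w c d P \<epsilon> T q
             \<le> ennreal (C * (1 + ln (n + 1 / \<epsilon>)) powr e *
                  (n powr \<rho>' / p1 * (1 / ln (1 / p2') + 1)
                   + n powr \<alpha> / p1 * real (card (approx_NN s d P (\<epsilon> * (2 + \<epsilon>)) q))))))"
proof -
  interpret stable_lsh s w D f
    using assms by unfold_locales auto
  \<comment> \<open>The hypotheses on the coordinates beyond d and on the finiteness of set_pmf T are not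
    needed: ldist only reads the first d coordinates, and the expectation over T is bounded pointwise.\<close>
  show ?thesis
  proof (rule exI[of _ "6 * (c + 1)"], rule exI[of _ 2], intro conjI allI impI)
    show "0 < 6 * (c + 1)"
      using \<open>0 < c\<close> by simp
  qed (unfold Let_def, elim conjE, rule step2_time_le, (assumption | rule \<open>0 < c\<close>)+)
qed

end
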